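(* Let $u,v,w\in\mathfrak{S}_n$ with $v\le u\le w$, and let $1\le r\le n-1$ with $s_r\notin\mathrm{supp}(w)$. Then (1) $\underline{T}(u,[v,s_rw])=\underline{T}(u,[v,w])$ and $\underline{T}(u,[v,ws_r])=\underline{T}(u,[v,w])$; (2) $\overline{T}(u,[v,s_rw])=\overline{T}(u,[v,w])\cup\{(u^{-1}(r),u^{-1}(r+1))\}$; (3) $\overline{T}(u,[v,ws_r])=\overline{T}(u,[v,w])\cup\{(r,r+1)\}$; (4) $\overline{T}(s_ru,[v,s_rw])=\overline{T}(u,[v,w])$; (5) $\underline{T}(s_ru,[v,s_rw])=\underline{T}(u,[v,w])\cup\{(u^{-1}(r),u^{-1}(r+1))\}$; (6) $\overline{T}(us_r,[v,ws_r])=\{(s_r(i),s_r(j)) : (i,j)\in\overline{T}(u,[v,w])\}$; (7) $\underline{T}(us_r,[v,ws_r])=\{(s_r(i),s_r(j)) : (i,j)\in\underline{T}(u,[v,w])\}\cup\{(r,r+1)\}$.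
   Context: $\mathfrak{S}_n$ with simple transpositions $s_i=(i,i+1)$, length $\ell$, Bruhat order $\le$, and $[x,y]=\{u: x\le u\le y\}$. $\mathrm{supp}(w)$ is the set of simple transpositions occurring in a reduced decomposition of $w$. $T$ is the set of transpositions $(i,j)$ of $[n]$ (a transposition is identified with the unordered pair it swaps). Products are composition of permutations, so $u(i,j)$ denotes $u$ composed on the right with the transposition $(i,j)$. For $u\in[v,w]$: $\overline{T}(u,[v,w])=\{(i,j)\in T: u<u(i,j)\le w,\ \ell(u(i,j))-\ell(u)=1\}$ and $\underline{T}(u,[v,w])=\{(i,j)\in T: v\le u(i,j)<u,\ \ell(u)-\ell(u(i,j))=1\}$. *)

theory Defs
  imports "HOL-Combinatorics.Combinatorics"
begin

text \<open>Permutations of [n] = {1..n} are functions nat \<Rightarrow> nat with p permutes {1..n}.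
  Products are composition, so u(i,j) is u \<circ> transpose i j.\<close>

definition sperm :: "nat \<Rightarrow> (nat \<Rightarrow> nat) set" where
  "sperm n = {p. p permutes {1..n}}"

definition s :: "nat \<Rightarrow> nat \<Rightarrow> nat" where
  "s i = Transposition.transpose i (Suc i)"

definition len :: "nat \<Rightarrow> (nat \<Rightarrow> nat) \<Rightarrow> nat" where
  "len n w = card {(i, j). 1 \<le> i \<and> i < j \<and> j \<le> n \<and> w j < w i}"

definition bruhat_step :: "nat \<Rightarrow> (nat \<Rightarrow> nat) \<Rightarrow> (nat \<Rightarrow> nat) \<Rightarrow> bool" where
  "bruhat_step n u x \<longleftrightarrow> u \<in> sperm n \<and>
     (\<exists>i j. 1 \<le> i \<and> i < j \<and> j \<le> n \<and> x = u \<circ> Transposition.transpose i j \<and> len n u < len n x)"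

definition bruhat_le :: "nat \<Rightarrow> (nat \<Rightarrow> nat) \<Rightarrow> (nat \<Rightarrow> nat) \<Rightarrow> bool" where
  "bruhat_le n u w \<longleftrightarrow> u \<in> sperm n \<and> w \<in> sperm n \<and> (bruhat_step n)\<^sup>*\<^sup>* u w"

definition bruhat_lt :: "nat \<Rightarrow> (nat \<Rightarrow> nat) \<Rightarrow> (nat \<Rightarrow> nat) \<Rightarrow> bool" where
  "bruhat_lt n u w \<longleftrightarrow> bruhat_le n u w \<and> u \<noteq> w"

definition reduced_word :: "nat \<Rightarrow> (nat \<Rightarrow> nat) \<Rightarrow> nat list \<Rightarrow> bool" where
  "reduced_word n w a \<longleftrightarrow> (\<forall>i\<in>set a. 1 \<le> i \<and> i \<le> n - 1) \<and>
     foldr (\<lambda>i f. s i \<circ> f) a id = w \<and> length a = len n w"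

definition supp :: "nat \<Rightarrow> (nat \<Rightarrow> nat) \<Rightarrow> (nat \<Rightarrow> nat) set" where
  "supp n w = {s i | i a. reduced_word n w a \<and> i \<in> set a}"

text \<open>Transpositions (i,j) identified with unordered pairs {i,j}\<close>
definition Tup :: "nat \<Rightarrow> (nat \<Rightarrow> nat) \<Rightarrow> (nat \<Rightarrow> nat) \<Rightarrow> (nat \<Rightarrow> nat) \<Rightarrow> nat set set" where
  "Tup n u v w = {{i, j} | i j. 1 \<le> i \<and> i < j \<and> j \<le> n \<and>
      bruhat_lt n u (u \<circ> Transposition.transpose i j) \<and>
      bruhat_le n (u \<circ> Transposition.transpose i j) w \<and>
      int (len n (u \<circ> Transposition.transpose i j)) - int (len n u) = 1}"

definition Tdown :: "nat \<Rightarrow> (nat \<Rightarrow> nat) \<Rightarrow> (nat \<Rightarrow> nat) \<Rightarrow> (nat \<Rightarrow> nat) \<Rightarrow> nat set set" where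
  "Tdown n u v w = {{i, j} | i j. 1 \<le> i \<and> i < j \<and> j \<le> n \<and>
      bruhat_le n v (u \<circ> Transposition.transpose i j) \<and>
      bruhat_lt n (u \<circ> Transposition.transpose i j) u \<and>
      int (len n u) - int (len n (u \<circ> Transposition.transpose i j)) = 1}"

end

theory Submission
  imports Defs
begin

text \<open>Since s r is not in the support of w, w lies in the parabolic subgroup stabilising
  {1..r}, and so does everything below it, in particular u and v. The argument runs through the
  rank-matrix criterion: x \<le> y in the Bruhat order iff for all a and b no more of
  x 1, ..., x a than of y 1, ..., y a are \<ge> b. Inside the parabolic subgroup, multiplying by s r
  on either side raises the length by one and preserves and reflects the order, which handles
  every transposition (i j) for which u \<circ> (i j) stays in the subgroup. If it leaves the
  subgroup then i \<le> r < j, and comparing row r (for s r on the left) or column r + 1 (for s r on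
  the right) of the rank matrices forces (i, j) to be (u\<inverse>(r), u\<inverse>(r + 1)) respectively
  (r, r + 1).\<close>

abbreviation tr :: "nat \<Rightarrow> nat \<Rightarrow> nat \<Rightarrow> nat" where
  "tr \<equiv> Transposition.transpose"

lemma sperm_fixpoint: "x \<in> sperm n \<Longrightarrow> k \<notin> {1..n} \<Longrightarrow> x k = k"
  by (simp add: sperm_def permutes_not_in)

lemma sperm_in: "x \<in> sperm n \<Longrightarrow> k \<in> {1..n} \<Longrightarrow> x k \<in> {1..n}"
  unfolding sperm_def using permutes_in_image[of x "{1..n}" k] by simp

lemma sperm_image: "x \<in> sperm n \<Longrightarrow> x ` {1..n} = {1..n}"
  by (simp add: sperm_def permutes_image)

lemma sperm_inj: "x \<in> sperm n \<Longrightarrow> inj x"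
  by (simp add: sperm_def permutes_inj)

lemma sperm_eq_iff: "x \<in> sperm n \<Longrightarrow> x a = x b \<longleftrightarrow> a = b"
  using sperm_inj by (metis injD)

lemma sperm_comp: "x \<in> sperm n \<Longrightarrow> y \<in> sperm n \<Longrightarrow> x \<circ> y \<in> sperm n"
  by (simp add: sperm_def permutes_compose)

lemma sperm_comp_transpose:
  "x \<in> sperm n \<Longrightarrow> i \<in> {1..n} \<Longrightarrow> j \<in> {1..n} \<Longrightarrow> x \<circ> tr i j \<in> sperm n"
  by (simp add: sperm_def permutes_compose permutes_swap_id)

lemma comp_transpose_twice: "x \<circ> tr i j \<circ> tr i j = x"
  by (simp add: comp_assoc)

lemma s_apply: "s r k = (if k = r then Suc r else if k = Suc r then r else k)"
  by (simp add: s_def transpose_def)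

lemma s_involutory [simp]: "s r (s r k) = k"
  by (simp add: s_def)

lemma s_sperm: "1 \<le> r \<Longrightarrow> r < n \<Longrightarrow> s r \<in> sperm n"
  by (simp add: sperm_def s_def permutes_swap_id)

lemma comp_s_comp_transpose: "x \<circ> s r \<circ> tr (s r i) (s r j) = x \<circ> tr i j \<circ> s r"
proof -
  have "tr i j \<circ> s r = s r \<circ> tr (inv (s r) i) (inv (s r) j)"
    by (rule transpose_comp_eq) (simp add: s_def)
  then show ?thesis by (simp add: s_def comp_assoc)
qed

definition inversions :: "nat \<Rightarrow> (nat \<Rightarrow> nat) \<Rightarrow> (nat \<times> nat) set" where
  "inversions n x = {(i, j). 1 \<le> i \<and> i < j \<and> j \<le> n \<and> x j < x i}"

lemma len_eq_card_inversions: "len n x = card (inversions n x)"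
  by (simp add: len_def inversions_def)

lemma finite_inversions: "finite (inversions n x)"
  by (rule finite_subset[of _ "{1..n} \<times> {1..n}"]) (auto simp: inversions_def)

lemma len_id: "len n id = 0"
proof -
  have "inversions n id = {}" by (auto simp: inversions_def)
  then show ?thesis by (simp add: len_eq_card_inversions)
qed

text \<open>This map injects the inversions of x into those of x \<circ> (i j) other than (i, j), and
  conversely when no x k with i < k < j lies strictly between x i and x j.\<close>

definition pair_transpose :: "nat \<Rightarrow> nat \<Rightarrow> nat \<times> nat \<Rightarrow> nat \<times> nat" where
  "pair_transpose i j p =
     (if fst p < i \<or> j < snd p then (tr i j (fst p), tr i j (snd p)) else p)"

lemma inj_pair_transpose: "i < j \<Longrightarrow> inj_on (pair_transpose i j) A"
  unfolding pair_transpose_def inj_on_def by (auto simp: transpose_def split: if_splits)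

lemma len_less_len_comp_transpose:
  assumes ij: "1 \<le> i" "i < j" "j \<le> n" and xij: "x i < x j"
  shows "len n x < len n (x \<circ> tr i j)"
proof -
  have sub: "pair_transpose i j ` inversions n x \<subseteq> inversions n (x \<circ> tr i j) - {(i, j)}"
    using ij xij unfolding pair_transpose_def inversions_def
    by (auto simp: transpose_def split: if_splits)
  have mem: "(i, j) \<in> inversions n (x \<circ> tr i j)"
    using ij xij by (auto simp: inversions_def)
  have "card (inversions n x) = card (pair_transpose i j ` inversions n x)"
    using inj_pair_transpose[OF ij(2)] by (simp add: card_image)
  also have "\<dots> \<le> card (inversions n (x \<circ> tr i j) - {(i, j)})"
    using sub finite_inversions by (intro card_mono) auto
  also have "\<dots> < card (inversions n (x \<circ> tr i j))"
    by (rule card_Diff1_less[OF finite_inversions mem])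
  finally show ?thesis by (simp add: len_eq_card_inversions)
qed

lemma len_comp_transpose_le:
  assumes x: "x \<in> sperm n" and ij: "1 \<le> i" "i < j" "j \<le> n" and xij: "x i < x j"
    and no_between: "\<And>k. i < k \<Longrightarrow> k < j \<Longrightarrow> \<not> (x i < x k \<and> x k < x j)"
  shows "len n (x \<circ> tr i j) \<le> len n x + 1"
proof -
  have "pair_transpose i j ` (inversions n (x \<circ> tr i j) - {(i, j)}) \<subseteq> inversions n x"
  proof
    fix p assume "p \<in> pair_transpose i j ` (inversions n (x \<circ> tr i j) - {(i, j)})"
    then obtain a b where ab: "(a, b) \<in> inversions n (x \<circ> tr i j)" "(a, b) \<noteq> (i, j)"
      and p: "p = pair_transpose i j (a, b)" by auto
    from ab have a: "1 \<le> a" "a < b" "b \<le> n" "x (tr i j b) < x (tr i j a)"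
      by (auto simp: inversions_def)
    show "p \<in> inversions n x"
    proof (cases "a < i \<or> j < b")
      case True
      then show ?thesis using a ij unfolding p pair_transpose_def inversions_def
        by (auto simp: transpose_def split: if_splits)
    next
      case False
      have "x b < x a"
      proof (cases "a = i"; cases "b = j")
        assume "a = i" "b \<noteq> j"
        then show ?thesis using a False no_between[of b] sperm_eq_iff[OF x, of b i]
          by (auto simp: transpose_def)
      next
        assume "a \<noteq> i" "b = j"
        then show ?thesis using a False no_between[of a] sperm_eq_iff[OF x, of a j]
          by (auto simp: transpose_def)
      qed (use a ab False in \<open>auto simp: transpose_def\<close>)
      then show ?thesis using a False unfolding p pair_transpose_def inversions_def by auto
    qed
  qed
  then have "card (inversions n (x \<circ> tr i j) - {(i, j)}) \<le> card (inversions n x)"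
    using inj_pair_transpose[OF ij(2)] finite_inversions
    by (metis card_image card_mono)
  moreover have "(i, j) \<in> inversions n (x \<circ> tr i j)"
    using ij xij by (auto simp: inversions_def)
  ultimately show ?thesis
    using finite_inversions by (simp add: len_eq_card_inversions card_Diff_singleton)
qed

lemma len_comp_transpose_cover:
  assumes "x \<in> sperm n" "1 \<le> i" "i < j" "j \<le> n" "x i < x j"
    and "\<And>k. i < k \<Longrightarrow> k < j \<Longrightarrow> \<not> (x i < x k \<and> x k < x j)"
  shows "len n (x \<circ> tr i j) = len n x + 1"
  using len_less_len_comp_transpose[OF assms(2-5)] len_comp_transpose_le[OF assms] by simp

lemma len_less_len_comp_transpose_iff:
  assumes x: "x \<in> sperm n" and ij: "1 \<le> i" "i < j" "j \<le> n"
  shows "len n x < len n (x \<circ> tr i j) \<longleftrightarrow> x i < x j"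
proof
  assume less: "len n x < len n (x \<circ> tr i j)"
  show "x i < x j"
  proof (rule ccontr)
    assume "\<not> x i < x j"
    then have "(x \<circ> tr i j) i < (x \<circ> tr i j) j"
      using sperm_eq_iff[OF x, of i j] ij by auto
    then have "len n (x \<circ> tr i j) < len n x"
      using len_less_len_comp_transpose[OF ij, of "x \<circ> tr i j"] by (simp add: comp_transpose_twice)
    with less show False by simp
  qed
qed (use len_less_len_comp_transpose ij in blast)

subsection \<open>The rank criterion for the Bruhat order\<close>

definition rank :: "(nat \<Rightarrow> nat) \<Rightarrow> nat \<Rightarrow> nat \<Rightarrow> nat" where
  "rank x a b = card {k \<in> {1..a}. b \<le> x k}"

definition rank_le :: "(nat \<Rightarrow> nat) \<Rightarrow> (nat \<Rightarrow> nat) \<Rightarrow> bool" where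
  "rank_le x y \<longleftrightarrow> (\<forall>a b. rank x a b \<le> rank y a b)"

lemma rank_0 [simp]: "rank x 0 b = 0"
  by (simp add: rank_def)

lemma rank_Suc: "rank x (Suc a) b = rank x a b + (if b \<le> x (Suc a) then 1 else 0)"
proof -
  have "{k \<in> {1..Suc a}. b \<le> x k} =
      (if b \<le> x (Suc a) then insert (Suc a) {k \<in> {1..a}. b \<le> x k} else {k \<in> {1..a}. b \<le> x k})"
    by (auto simp: le_Suc_eq)
  then show ?thesis by (simp add: rank_def)
qed

lemma rank_comp_transpose:
  assumes "1 \<le> i" "i < j"
  shows "rank (x \<circ> tr i j) a b + (if i \<le> a \<and> a < j \<and> b \<le> x i then 1 else 0)
       = rank x a b + (if i \<le> a \<and> a < j \<and> b \<le> x j then 1 else 0)"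
proof (induction a)
  case (Suc a)
  consider "Suc a = i" | "Suc a = j" | "Suc a \<noteq> i" "Suc a \<noteq> j" by blast
  then show ?case using Suc assms by cases (auto simp: rank_Suc)
qed (use assms in simp)

lemma rank_comp_transpose_outside:
  "1 \<le> i \<Longrightarrow> i < j \<Longrightarrow> \<not> (i \<le> a \<and> a < j) \<Longrightarrow> rank (x \<circ> tr i j) a b = rank x a b"
  using rank_comp_transpose[of i j x a b] by auto

lemma rank_mono_comp_transpose:
  "1 \<le> i \<Longrightarrow> i < j \<Longrightarrow> x i < x j \<Longrightarrow> rank x a b \<le> rank (x \<circ> tr i j) a b"
  using rank_comp_transpose[of i j x a b] by (auto split: if_splits)

lemma rank_le_refl: "rank_le x x"
  by (simp add: rank_le_def)

lemma rank_le_trans: "rank_le x y \<Longrightarrow> rank_le y z \<Longrightarrow> rank_le x z"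
  unfolding rank_le_def using le_trans by blast

lemma rank_le_comp_transpose_of_len_less:
  assumes x: "x \<in> sperm n" and ij: "1 \<le> i" "i < j" "j \<le> n"
    and less: "len n x < len n (x \<circ> tr i j)"
  shows "rank_le x (x \<circ> tr i j)"
  using len_less_len_comp_transpose_iff[OF x ij] less rank_mono_comp_transpose ij
  unfolding rank_le_def by blast

lemma rank_le_of_len_comp_transpose_less:
  assumes x: "x \<in> sperm n" and ij: "1 \<le> i" "i < j" "j \<le> n"
    and less: "len n (x \<circ> tr i j) < len n x"
  shows "rank_le (x \<circ> tr i j) x"
  using rank_le_comp_transpose_of_len_less[of "x \<circ> tr i j", OF _ ij] sperm_comp_transpose[OF x] ij less
  by (simp add: comp_transpose_twice)

lemma bruhat_le_rank_le: "bruhat_le n x y \<Longrightarrow> rank_le x y"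
proof -
  have step: "rank_le x z" if "bruhat_step n x z" for x z
    using that rank_le_comp_transpose_of_len_less unfolding bruhat_step_def by blast
  assume "bruhat_le n x y"
  then have "(bruhat_step n)\<^sup>*\<^sup>* x y" by (simp add: bruhat_le_def)
  then show ?thesis
    by (induction rule: rtranclp_induct) (auto intro: rank_le_refl rank_le_trans step)
qed

text \<open>The converse is proved by walking up from x: at the first position i where x and y
  differ, x i < y i, and swapping i with the first later position j whose value lies in
  (x i, y i] produces a permutation that is still rank-dominated by y.\<close>

lemma rank_le_first_difference:
  assumes c: "rank_le x y" and same: "\<And>k. k < i \<Longrightarrow> x k = y k" and i: "1 \<le> i"
    and ne: "x i \<noteq> y i"
  shows "x i < y i"
proof (rule ccontr)
  assume "\<not> x i < y i"
  then have yx: "y i < x i" using ne by simp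
  have "{k \<in> {1..i - 1}. b \<le> x k} = {k \<in> {1..i - 1}. b \<le> y k}" for b
    using same i by force
  then have "rank x (i - 1) b = rank y (i - 1) b" for b by (simp add: rank_def)
  moreover have "i = Suc (i - 1)" using i by simp
  ultimately have "rank y i (x i) < rank x i (x i)"
    using rank_Suc[of x "i - 1" "x i"] rank_Suc[of y "i - 1" "x i"] yx by simp
  with c show False unfolding rank_le_def by (metis not_le)
qed

lemma rank_le_comp_transpose:
  assumes c: "rank_le x y" and same: "\<And>k. k < i \<Longrightarrow> x k = y k" and i: "1 \<le> i"
    and j: "i < j" "x i < x j" "x j \<le> y i"
    and first: "\<And>k. i < k \<Longrightarrow> k < j \<Longrightarrow> \<not> (x i < x k \<and> x k \<le> y i)"
  shows "rank_le (x \<circ> tr i j) y"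
proof -
  \<comment> \<open>By the choice of j, the values of x in [b, y i] at positions up to a all sit before i,
    where x and y agree; y has the extra value y i there.\<close>
  have gap: "rank x a b < rank y a b" if ab: "i \<le> a" "a < j" "x i < b" "b \<le> y i" for a b
  proof -
    define c where "c = Suc (y i)"
    define L where "L = {k \<in> {1..a}. k < i \<and> b \<le> x k \<and> x k \<le> y i}"
    have L_y: "L = {k \<in> {1..a}. k < i \<and> b \<le> y k \<and> y k \<le> y i}"
      unfolding L_def using same by auto
    have "k < i" if "k \<in> {1..a}" "b \<le> x k" "x k \<le> y i" for k
    proof (rule ccontr)
      assume "\<not> k < i"
      moreover have "k \<noteq> i" using that ab by auto
      ultimately show False using first[of k] that ab by auto
    qed
    then have Sx: "{k \<in> {1..a}. b \<le> x k} = {k \<in> {1..a}. c \<le> x k} \<union> L"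
      unfolding L_def c_def using ab by auto
    have Sy: "{k \<in> {1..a}. c \<le> y k} \<union> L \<union> {i} \<subseteq> {k \<in> {1..a}. b \<le> y k}"
      unfolding L_y c_def using ab i by auto
    have "rank x a b = rank x a c + card L"
      unfolding rank_def Sx by (rule card_Un_disjoint) (auto simp: L_def c_def)
    moreover have "rank y a c + card L + 1 = card ({k \<in> {1..a}. c \<le> y k} \<union> L \<union> {i})"
      unfolding rank_def by (subst card_Un_disjoint; auto simp: L_y c_def)+
    moreover have "card ({k \<in> {1..a}. c \<le> y k} \<union> L \<union> {i}) \<le> rank y a b"
      unfolding rank_def by (rule card_mono[OF _ Sy]) simp
    moreover have "rank x a c \<le> rank y a c" using c unfolding rank_le_def by blast
    ultimately show ?thesis by simp
  qed
  show ?thesis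
    unfolding rank_le_def
  proof (intro allI)
    fix a b
    have swap: "rank (x \<circ> tr i j) a b + (if i \<le> a \<and> a < j \<and> b \<le> x i then 1 else 0)
       = rank x a b + (if i \<le> a \<and> a < j \<and> b \<le> x j then 1 else 0)"
      using rank_comp_transpose[of i j x a b] i j by auto
    show "rank (x \<circ> tr i j) a b \<le> rank y a b"
    proof (cases "i \<le> a \<and> a < j \<and> x i < b \<and> b \<le> x j")
      case True
      then show ?thesis using gap[of a b] j swap by auto
    next
      case False
      then have "rank (x \<circ> tr i j) a b \<le> rank x a b" using swap by (auto split: if_splits)
      then show ?thesis using c unfolding rank_le_def using le_trans by blast
    qed
  qed
qed

lemma rank_le_exists_transpose:
  assumes x: "x \<in> sperm n" and y: "y \<in> sperm n" and c: "rank_le x y" and ne: "x \<noteq> y"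
  shows "\<exists>i j. 1 \<le> i \<and> i < j \<and> j \<le> n \<and> x i < x j \<and> rank_le (x \<circ> tr i j) y"
proof -
  have ex: "\<exists>k. x k \<noteq> y k" using ne by auto
  define i where "i = (LEAST k. x k \<noteq> y k)"
  have xi: "x i \<noteq> y i" unfolding i_def using LeastI_ex[OF ex] .
  have same: "\<And>k. k < i \<Longrightarrow> x k = y k" unfolding i_def using not_less_Least by blast
  have i: "i \<in> {1..n}" using sperm_fixpoint[OF x] sperm_fixpoint[OF y] xi by metis
  have lt: "x i < y i" using rank_le_first_difference[OF c same _ xi] i by simp
  obtain k where k: "k \<in> {1..n}" "x k = y i"
    using sperm_in[OF y i] sperm_image[OF x] by (metis imageE)
  have "i < k"
    using same[of k] sperm_eq_iff[OF y, of k i] xi k by (cases "k < i") (auto simp: nat_neq_iff)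
  then have exj: "\<exists>k. i < k \<and> x i < x k \<and> x k \<le> y i" using k lt by auto
  define j where "j = (LEAST k. i < k \<and> x i < x k \<and> x k \<le> y i)"
  have j: "i < j" "x i < x j" "x j \<le> y i" unfolding j_def using LeastI_ex[OF exj] by auto
  have "j \<le> k" unfolding j_def using \<open>i < k\<close> k lt by (intro Least_le) auto
  moreover have "rank_le (x \<circ> tr i j) y"
    by (rule rank_le_comp_transpose[OF c same _ j]) (use i j_def not_less_Least in auto)
  ultimately show ?thesis using i j k by (intro exI[of _ i] exI[of _ j]) auto
qed

lemma rank_le_imp_bruhat_rtrancl:
  assumes "x \<in> sperm n" "y \<in> sperm n" "rank_le x y"
  shows "(bruhat_step n)\<^sup>*\<^sup>* x y"
  using assms
proof (induction "\<Sum>(a, b) \<in> {1..n} \<times> {1..n}. rank y a b - rank x a b" arbitrary: x rule: less_induct)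
  case less
  show ?case
  proof (cases "x = y")
    case False
    obtain i j where ij: "1 \<le> i" "i < j" "j \<le> n" "x i < x j" and cz: "rank_le (x \<circ> tr i j) y"
      using rank_le_exists_transpose[OF less.prems False] by blast
    let ?z = "x \<circ> tr i j"
    have z: "?z \<in> sperm n" using sperm_comp_transpose less.prems ij by auto
    have step: "bruhat_step n x ?z"
      unfolding bruhat_step_def using less.prems(1) ij len_less_len_comp_transpose[OF ij] by blast
    have xj: "x j \<in> {1..n}" using sperm_in less.prems(1) ij by auto
    have "(\<Sum>(a, b) \<in> {1..n} \<times> {1..n}. rank y a b - rank ?z a b)
        < (\<Sum>(a, b) \<in> {1..n} \<times> {1..n}. rank y a b - rank x a b)"
    proof (rule sum_strict_mono_ex1)
      show "\<forall>p\<in>{1..n} \<times> {1..n}. (case p of (a, b) \<Rightarrow> rank y a b - rank ?z a b)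
          \<le> (case p of (a, b) \<Rightarrow> rank y a b - rank x a b)"
        using rank_mono_comp_transpose[OF ij(1,2,4)] by (auto intro: diff_le_mono2)
      have "rank x i (x j) < rank ?z i (x j)"
        using rank_comp_transpose[of i j x i "x j"] ij by simp
      moreover have "rank ?z i (x j) \<le> rank y i (x j)" using cz by (simp add: rank_le_def)
      ultimately show "\<exists>p\<in>{1..n} \<times> {1..n}. (case p of (a, b) \<Rightarrow> rank y a b - rank ?z a b)
          < (case p of (a, b) \<Rightarrow> rank y a b - rank x a b)"
        using ij xj by (intro bexI[of _ "(i, x j)"]) auto
    qed simp
    then have "(bruhat_step n)\<^sup>*\<^sup>* ?z y" using less.hyps z less.prems cz by blast
    then show ?thesis by (rule converse_rtranclp_into_rtranclp[of "bruhat_step n", OF step])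
  qed simp
qed

lemma bruhat_le_iff_rank_le: "bruhat_le n x y \<longleftrightarrow> x \<in> sperm n \<and> y \<in> sperm n \<and> rank_le x y"
  using bruhat_le_rank_le rank_le_imp_bruhat_rtrancl unfolding bruhat_le_def by blast

subsection \<open>The parabolic subgroup fixing {1..r}\<close>

text \<open>The permutations in \<open>\<Sigma>\<^sub>r \<times> \<Sigma>\<^sub>n\<^sub>-\<^sub>r\<close>, i.e.\ those generated by the s i with i \<noteq> r.\<close>

definition parabolic :: "nat \<Rightarrow> (nat \<Rightarrow> nat) \<Rightarrow> bool" where
  "parabolic r x \<longleftrightarrow> (\<forall>k. 1 \<le> k \<and> k \<le> r \<longrightarrow> x k \<le> r)"

lemma parabolic_image:
  assumes x: "x \<in> sperm n" and r: "r \<le> n" and P: "parabolic r x"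
  shows "x ` {1..r} = {1..r}"
proof (rule endo_inj_surj)
  show "x ` {1..r} \<subseteq> {1..r}" using P sperm_in[OF x] r unfolding parabolic_def by fastforce
  show "inj_on x {1..r}" using sperm_inj[OF x] by (simp add: inj_on_def inj_def)
qed simp

lemma parabolic_gt:
  assumes x: "x \<in> sperm n" and r: "r \<le> n" and P: "parabolic r x" and k: "r < k"
  shows "r < x k"
proof (cases "k \<in> {1..n}")
  case True
  show ?thesis
  proof (rule ccontr)
    assume "\<not> r < x k"
    then have "x k \<in> x ` {1..r}" using parabolic_image[OF x r P] sperm_in[OF x True] by auto
    then show False using sperm_eq_iff[OF x] k by auto
  qed
qed (use sperm_fixpoint[OF x] k in simp)

lemma rank_parabolic_Suc:
  assumes x: "x \<in> sperm n" and r: "r \<le> n" and P: "parabolic r x"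
  shows "rank x a (Suc r) = a - r"
proof (induction a)
  case (Suc a)
  have "Suc r \<le> x (Suc a) \<longleftrightarrow> r < Suc a"
    using parabolic_gt[OF x r P, of "Suc a"] P unfolding parabolic_def by (cases "Suc a \<le> r") auto
  then show ?case using Suc by (simp add: rank_Suc Suc_diff_le)
qed simp

lemma rank_parabolic_prefix:
  assumes x: "x \<in> sperm n" and r: "r \<le> n" and P: "parabolic r x"
  shows "rank x r b = card {v \<in> {1..r}. b \<le> v}"
proof -
  have "x ` {k \<in> {1..r}. b \<le> x k} = {v \<in> x ` {1..r}. b \<le> v}" by auto
  then have "x ` {k \<in> {1..r}. b \<le> x k} = {v \<in> {1..r}. b \<le> v}"
    using parabolic_image[OF x r P] by simp
  moreover have "inj_on x {k \<in> {1..r}. b \<le> x k}"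
    using sperm_inj[OF x] by (simp add: inj_on_def inj_def)
  ultimately show ?thesis unfolding rank_def by (metis card_image)
qed

lemma rank_le_parabolic:
  assumes c: "rank_le y x" and P: "parabolic r x" and x: "x \<in> sperm n" and r: "r \<le> n"
  shows "parabolic r y"
proof -
  have "rank y r (Suc r) = 0"
    using c rank_parabolic_Suc[OF x r P, of r] unfolding rank_le_def by (metis diff_self_eq_0 le_zero_eq)
  then have "{k \<in> {1..r}. Suc r \<le> y k} = {}" unfolding rank_def by simp
  then show ?thesis unfolding parabolic_def by force
qed

lemma parabolic_comp_transpose:
  assumes P: "parabolic r x" and ij: "1 \<le> i" "i < j" and out: "r < i \<or> j \<le> r"
  shows "parabolic r (x \<circ> tr i j)"
  using P out ij unfolding parabolic_def
  by (metis comp_apply le_trans less_imp_le_nat linorder_not_le transpose_apply_other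
      transpose_apply_first transpose_apply_second)

lemma rank_comp_transpose_crossing:
  assumes x: "x \<in> sperm n" and r: "r \<le> n" and P: "parabolic r x"
    and ij: "1 \<le> i" "i \<le> r" "r < j" and a: "i \<le> a" "a < j"
  shows "rank (x \<circ> tr i j) a (Suc r) = a - r + 1"
proof -
  have "x i \<le> r" using P ij unfolding parabolic_def by auto
  moreover have "r < x j" using parabolic_gt[OF x r P ij(3)] .
  ultimately show ?thesis
    using rank_comp_transpose[of i j x a "Suc r"] rank_parabolic_Suc[OF x r P] ij a by simp
qed

lemma crossing_transpose_row:
  assumes x: "x \<in> sperm n" and r: "1 \<le> r" "r \<le> n" and P: "parabolic r x"
    and ij: "1 \<le> i" "i < j" and nP: "\<not> parabolic r (x \<circ> tr i j)"
    and X: "X \<in> sperm n" "parabolic r X"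
    and le: "\<And>b. b \<noteq> Suc r \<Longrightarrow> rank (x \<circ> tr i j) r b \<le> rank X r b"
  shows "x i = r \<and> x j = Suc r"
proof -
  have "\<not> (r < i \<or> j \<le> r)" using parabolic_comp_transpose[OF P ij] nP by blast
  then have ir: "i \<le> r" "r < j" by auto
  have xi: "x i \<le> r" using P ij ir unfolding parabolic_def by auto
  have xj: "r < x j" using parabolic_gt[OF x r(2) P ir(2)] .
  have "{v \<in> {1..r}. r \<le> v} = {r}" using r by auto
  then have "rank x r r = 1" "rank x r (Suc (Suc r)) = 0" "rank X r r = 1" "rank X r (Suc (Suc r)) = 0"
    using rank_parabolic_prefix[OF x r(2) P] rank_parabolic_prefix[OF X(1) r(2) X(2)] by simp_all
  then show ?thesis
    using rank_comp_transpose[of i j x r r] rank_comp_transpose[of i j x r "Suc (Suc r)"]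
      le[of r] le[of "Suc (Suc r)"] ij ir xi xj by (auto split: if_splits)
qed

lemma crossing_transpose_column:
  assumes x: "x \<in> sperm n" and r: "r \<le> n" and P: "parabolic r x"
    and ij: "1 \<le> i" "i < j" and nP: "\<not> parabolic r (x \<circ> tr i j)"
    and X: "X \<in> sperm n" "parabolic r X"
    and le: "\<And>a. a \<noteq> r \<Longrightarrow> rank (x \<circ> tr i j) a (Suc r) \<le> rank X a (Suc r)"
  shows "i = r \<and> j = Suc r"
proof -
  have "\<not> (r < i \<or> j \<le> r)" using parabolic_comp_transpose[OF P ij] nP by blast
  then have ir: "i \<le> r" "r < j" by auto
  have "\<not> i < r"
  proof
    assume "i < r"
    then show False
      using le[of i] rank_comp_transpose_crossing[OF x r P ij(1) ir, of i] ir
        rank_parabolic_Suc[OF X(1) r X(2), of i] by simp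
  qed
  moreover have "\<not> Suc r < j"
  proof
    assume "Suc r < j"
    then show False
      using le[of "Suc r"] rank_comp_transpose_crossing[OF x r P ij(1) ir, of "Suc r"] ir
        rank_parabolic_Suc[OF X(1) r X(2), of "Suc r"] by simp
  qed
  ultimately show ?thesis using ir by auto
qed

lemma rank_s_comp: "b \<noteq> Suc r \<Longrightarrow> rank (s r \<circ> x) a b = rank x a b"
  by (induction a) (auto simp: rank_Suc s_apply)

lemma rank_s_comp_Suc: "rank (s r \<circ> x) a (Suc r) + rank x a (Suc r) = rank x a r + rank x a (Suc (Suc r))"
  by (induction a) (auto simp: rank_Suc s_apply)

lemma rank_comp_s: "a \<noteq> r \<Longrightarrow> 1 \<le> r \<Longrightarrow> rank (x \<circ> s r) a b = rank x a b"
  using rank_comp_transpose_outside[of r "Suc r" a x b] by (simp add: s_def)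

lemma rank_comp_s_at:
  assumes "1 \<le> r"
  shows "rank (x \<circ> s r) r b + rank x r b = rank x (r - 1) b + rank x (Suc r) b"
  using rank_comp_transpose[of r "Suc r" x r b] rank_Suc[of x r b] rank_Suc[of x "r - 1" b] assms
  by (simp add: s_def split: if_splits)

context
  fixes n r :: nat
  assumes r: "1 \<le> r" "r < n"
begin

lemma rank_le_s_comp_iff:
  assumes x: "x \<in> sperm n" and y: "y \<in> sperm n" and Px: "parabolic r x" and Py: "parabolic r y"
  shows "rank_le (s r \<circ> x) (s r \<circ> y) \<longleftrightarrow> rank_le x y"
proof -
  have Suc_r: "rank x a (Suc r) = rank y a (Suc r)" for a
    using rank_parabolic_Suc x y Px Py r by simp
  have "rank (s r \<circ> x) a b \<le> rank (s r \<circ> y) a b \<longleftrightarrow> rank x a b \<le> rank y a b"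
    if "b \<noteq> Suc r" for a b
    using rank_s_comp[OF that] by simp
  moreover have "rank (s r \<circ> x) a (Suc r) \<le> rank (s r \<circ> y) a (Suc r)" if "rank_le x y" for a
  proof -
    have "rank x a r \<le> rank y a r" "rank x a (Suc (Suc r)) \<le> rank y a (Suc (Suc r))"
      using that by (simp_all add: rank_le_def)
    then show ?thesis using rank_s_comp_Suc[of r x a] rank_s_comp_Suc[of r y a] Suc_r[of a] by linarith
  qed
  ultimately show ?thesis
    unfolding rank_le_def using Suc_r by (metis order.refl)
qed

lemma rank_le_of_rank_le_s_comp:
  assumes x: "x \<in> sperm n" and y: "y \<in> sperm n" and Px: "parabolic r x" and Py: "parabolic r y"
    and c: "rank_le x (s r \<circ> y)"
  shows "rank_le x y"
  unfolding rank_le_def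
proof (intro allI)
  fix a b
  show "rank x a b \<le> rank y a b"
  proof (cases "b = Suc r")
    case False
    then show ?thesis using c rank_s_comp[OF False, of y a] unfolding rank_le_def by metis
  qed (use rank_parabolic_Suc x y Px Py r in simp)
qed

lemma rank_le_comp_s_iff:
  assumes x: "x \<in> sperm n" and y: "y \<in> sperm n" and Px: "parabolic r x" and Py: "parabolic r y"
  shows "rank_le (x \<circ> s r) (y \<circ> s r) \<longleftrightarrow> rank_le x y"
proof -
  have row_r: "rank x r b = rank y r b" for b
    using rank_parabolic_prefix x y Px Py r by simp
  have "rank (x \<circ> s r) a b \<le> rank (y \<circ> s r) a b \<longleftrightarrow> rank x a b \<le> rank y a b"
    if "a \<noteq> r" for a b
    using rank_comp_s[OF that r(1)] by simp
  moreover have "rank (x \<circ> s r) r b \<le> rank (y \<circ> s r) r b" if "rank_le x y" for b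
  proof -
    have "rank x (r - 1) b \<le> rank y (r - 1) b" "rank x (Suc r) b \<le> rank y (Suc r) b"
      using that by (simp_all add: rank_le_def)
    then show ?thesis
      using rank_comp_s_at[OF r(1), of x b] rank_comp_s_at[OF r(1), of y b] row_r[of b] by linarith
  qed
  ultimately show ?thesis
    unfolding rank_le_def using row_r by (metis order.refl)
qed

lemma rank_le_of_rank_le_comp_s:
  assumes x: "x \<in> sperm n" and y: "y \<in> sperm n" and Px: "parabolic r x" and Py: "parabolic r y"
    and c: "rank_le x (y \<circ> s r)"
  shows "rank_le x y"
  unfolding rank_le_def
proof (intro allI)
  fix a b
  show "rank x a b \<le> rank y a b"
  proof (cases "a = r")
    case False
    then show ?thesis using c rank_comp_s[OF False r(1), of y b] unfolding rank_le_def by metis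
  qed (use rank_parabolic_prefix x y Px Py r in simp)
qed

lemma s_comp_eq_comp_transpose: "x \<in> sperm n \<Longrightarrow> s r \<circ> x = x \<circ> tr (inv x r) (inv x (Suc r))"
  unfolding s_def by (rule transpose_comp_eq) (simp add: sperm_def permutes_bij)

lemma parabolic_inv_positions:
  assumes x: "x \<in> sperm n" and P: "parabolic r x"
  shows "1 \<le> inv x r" "inv x r \<le> r" "r < inv x (Suc r)" "inv x (Suc r) \<le> n"
    "x (inv x r) = r" "x (inv x (Suc r)) = Suc r"
proof -
  have xp: "x permutes {1..n}" using x by (simp add: sperm_def)
  show xr: "x (inv x r) = r" "x (inv x (Suc r)) = Suc r" using permutes_inverses[OF xp] by auto
  have "inv x \<in> sperm n" using permutes_inv[OF xp] by (simp add: sperm_def)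
  then have inv_in: "inv x r \<in> {1..n}" "inv x (Suc r) \<in> {1..n}" using sperm_in r by auto
  then show "1 \<le> inv x r" "inv x (Suc r) \<le> n" by simp_all
  show "inv x r \<le> r"
  proof (rule ccontr)
    assume "\<not> inv x r \<le> r"
    then show False using parabolic_gt[OF x _ P, of "inv x r"] xr r by simp
  qed
  show "r < inv x (Suc r)"
  proof (rule ccontr)
    assume "\<not> r < inv x (Suc r)"
    then show False using P inv_in xr unfolding parabolic_def by force
  qed
qed

lemma len_s_comp:
  assumes x: "x \<in> sperm n" and P: "parabolic r x"
  shows "len n (s r \<circ> x) = len n x + 1"
proof -
  note pos = parabolic_inv_positions[OF x P]
  have "len n (x \<circ> tr (inv x r) (inv x (Suc r))) = len n x + 1"
    by (rule len_comp_transpose_cover[OF x]) (use pos in auto)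
  then show ?thesis using s_comp_eq_comp_transpose[OF x] by simp
qed

lemma len_comp_s:
  assumes x: "x \<in> sperm n" and P: "parabolic r x"
  shows "len n (x \<circ> s r) = len n x + 1"
proof -
  have "x r \<le> r" using P r unfolding parabolic_def by auto
  moreover have "r < x (Suc r)" using parabolic_gt[OF x _ P] r by simp
  ultimately have "len n (x \<circ> tr r (Suc r)) = len n x + 1"
    by (intro len_comp_transpose_cover[OF x]) (use r in auto)
  then show ?thesis by (simp add: s_def)
qed

lemma bruhat_le_s_comp:
  assumes x: "x \<in> sperm n" and P: "parabolic r x"
  shows "bruhat_le n x (s r \<circ> x)"
proof -
  note pos = parabolic_inv_positions[OF x P]
  have "bruhat_step n x (s r \<circ> x)"
    unfolding bruhat_step_def s_comp_eq_comp_transpose[OF x]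
    using x pos len_s_comp[OF x P] s_comp_eq_comp_transpose[OF x]
    by (intro conjI exI[of _ "inv x r"] exI[of _ "inv x (Suc r)"]) auto
  then show ?thesis unfolding bruhat_le_def using x sperm_comp[OF s_sperm[OF r]] by auto
qed

lemma bruhat_le_comp_s:
  assumes x: "x \<in> sperm n" and P: "parabolic r x"
  shows "bruhat_le n x (x \<circ> s r)"
proof -
  have "bruhat_step n x (x \<circ> s r)"
    unfolding bruhat_step_def using x r len_comp_s[OF x P]
    by (intro conjI exI[of _ r] exI[of _ "Suc r"]) (auto simp: s_def)
  then show ?thesis unfolding bruhat_le_def using x sperm_comp[OF x s_sperm[OF r]] by auto
qed

end

subsection \<open>Support and the parabolic subgroup\<close>

lemma foldr_s_comp: "foldr (\<lambda>i f. s i \<circ> f) a g = foldr (\<lambda>i f. s i \<circ> f) a id \<circ> g"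
  by (induction a arbitrary: g) (simp_all add: comp_assoc)

lemma exists_descent:
  assumes w: "w \<in> sperm n" and ne: "w \<noteq> id"
  shows "\<exists>i. 1 \<le> i \<and> i < n \<and> w (Suc i) < w i"
proof (rule ccontr)
  assume "\<not> ?thesis"
  then have inc: "w i < w (Suc i)" if "1 \<le> i" "i < n" for i
    using that sperm_eq_iff[OF w, of "Suc i" i] by (auto simp: nat_neq_iff)
  have ge: "k \<le> w k" if "1 \<le> k" "k \<le> n" for k
    using that
  proof (induction k rule: dec_induct)
    case base then show ?case using sperm_in[OF w, of 1] by simp
  qed (use inc in fastforce)
  have le: "w k \<le> k" if "1 \<le> k" "k \<le> n" for k
    using that(2)
  proof (induction k rule: inc_induct)
    case base then show ?case using sperm_in[OF w, of n] that by simp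
  next
    case (step m)
    then show ?case using inc[of m] that(1) by simp
  qed
  have "w = id"
  proof
    fix k show "w k = id k"
      using ge[of k] le[of k] sperm_fixpoint[OF w, of k] by (cases "k \<in> {1..n}") auto
  qed
  with ne show False by simp
qed

lemma exists_reduced_word: "w \<in> sperm n \<Longrightarrow> \<exists>a. reduced_word n w a"
proof (induction "len n w" arbitrary: w rule: less_induct)
  case less
  show ?case
  proof (cases "w = id")
    case True
    then show ?thesis by (intro exI[of _ "[]"]) (simp add: reduced_word_def len_id)
  next
    case False
    obtain i where i: "1 \<le> i" "i < n" "w (Suc i) < w i"
      using exists_descent[OF less.prems False] by blast
    let ?w = "w \<circ> s i"
    have w': "?w \<in> sperm n" using sperm_comp[OF less.prems s_sperm[OF i(1,2)]] .
    have cancel: "?w \<circ> s i = w" using comp_transpose_twice by (simp add: s_def)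
    have "len n (?w \<circ> tr i (Suc i)) = len n ?w + 1"
      by (rule len_comp_transpose_cover[OF w']) (use i in \<open>auto simp: s_apply\<close>)
    then have len_w: "len n w = len n ?w + 1" using cancel by (simp add: s_def)
    obtain b where b: "reduced_word n ?w b" using less.hyps[of ?w] len_w w' by auto
    have "reduced_word n w (b @ [i])"
      using b i cancel len_w unfolding reduced_word_def by (auto simp: foldr_s_comp[of b "s i"])
    then show ?thesis by blast
  qed
qed

lemma parabolic_word:
  "\<forall>i\<in>set a. 1 \<le> i \<and> i \<noteq> r \<Longrightarrow> parabolic r (foldr (\<lambda>i f. s i \<circ> f) a id)"
proof -
  assume "\<forall>i\<in>set a. 1 \<le> i \<and> i \<noteq> r"
  then have "1 \<le> foldr (\<lambda>i f. s i \<circ> f) a id k \<and> foldr (\<lambda>i f. s i \<circ> f) a id k \<le> r"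
    if "1 \<le> k" "k \<le> r" for k
    using that by (induction a) (auto simp: s_apply)
  then show ?thesis unfolding parabolic_def by blast
qed

lemma parabolic_if_s_notin_supp:
  assumes w: "w \<in> sperm n" and notin: "s r \<notin> supp n w"
  shows "parabolic r w"
proof -
  obtain a where a: "reduced_word n w a" using exists_reduced_word[OF w] by blast
  then have "r \<notin> set a" using notin unfolding supp_def by blast
  then show ?thesis
    using a parabolic_word[of a r] unfolding reduced_word_def by auto
qed

definition pairs :: "nat \<Rightarrow> (nat \<Rightarrow> nat \<Rightarrow> bool) \<Rightarrow> nat set set" where
  "pairs n P = {{i, j} | i j. 1 \<le> i \<and> i < j \<and> j \<le> n \<and> P i j}"

lemma pairs_cong:
  assumes "\<And>i j. 1 \<le> i \<Longrightarrow> i < j \<Longrightarrow> j \<le> n \<Longrightarrow> P i j \<longleftrightarrow> Q i j"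
  shows "pairs n P = pairs n Q"
proof -
  have "1 \<le> i \<and> i < j \<and> j \<le> n \<and> P i j \<longleftrightarrow> 1 \<le> i \<and> i < j \<and> j \<le> n \<and> Q i j" for i j
    using assms by blast
  then show ?thesis by (simp add: pairs_def)
qed

lemma pairs_insert:
  assumes PQ: "\<And>i j. 1 \<le> i \<Longrightarrow> i < j \<Longrightarrow> j \<le> n \<Longrightarrow> P i j \<longleftrightarrow> Q i j \<or> (i = a \<and> j = b)"
    and ab: "1 \<le> a" "a < b" "b \<le> n"
  shows "pairs n P = pairs n Q \<union> {{a, b}}"
proof -
  have "1 \<le> i \<and> i < j \<and> j \<le> n \<and> P i j \<longleftrightarrow>
      (1 \<le> i \<and> i < j \<and> j \<le> n \<and> Q i j) \<or> (i = a \<and> j = b)" for i j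
    using PQ ab by blast
  then show ?thesis unfolding pairs_def by auto
qed
lemma pairs_symmetric:
  assumes "\<And>i j. P i j \<longleftrightarrow> P j i"
  shows "pairs n P = {{i, j} | i j. i \<in> {1..n} \<and> j \<in> {1..n} \<and> i \<noteq> j \<and> P i j}"
  unfolding pairs_def
proof (intro equalityI subsetI)
  fix t assume "t \<in> {{i, j} | i j. i \<in> {1..n} \<and> j \<in> {1..n} \<and> i \<noteq> j \<and> P i j}"
  then obtain i j where t: "t = {i, j}" "i \<in> {1..n}" "j \<in> {1..n}" "i \<noteq> j" "P i j" by blast
  show "t \<in> {{i, j} | i j. 1 \<le> i \<and> i < j \<and> j \<le> n \<and> P i j}"
  proof (cases "i < j")
    case False
    then show ?thesis using t assms[of i j] by (intro CollectI exI[of _ j] exI[of _ i]) auto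
  qed (use t in auto)
qed force

lemma pairs_image:
  assumes f: "\<And>k. k \<in> {1..n} \<Longrightarrow> f k \<in> {1..n}" "\<And>k. f (f k) = k"
    and P: "\<And>i j. P i j \<longleftrightarrow> P j i" and Q: "\<And>i j. Q i j \<longleftrightarrow> Q j i"
    and PQ: "\<And>i j. 1 \<le> i \<Longrightarrow> i < j \<Longrightarrow> j \<le> n \<Longrightarrow> P (f i) (f j) \<longleftrightarrow> Q i j"
  shows "pairs n P = (\<lambda>t. f ` t) ` pairs n Q"
proof -
  have PQ': "P (f i) (f j) \<longleftrightarrow> Q i j" if "i \<in> {1..n}" "j \<in> {1..n}" "i \<noteq> j" for i j
  proof (cases "i < j")
    case False
    then show ?thesis using PQ[of j i] P[of "f i"] Q[of i] that by simp
  qed (use PQ that in simp)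
  have f_eq: "f i = f j \<longleftrightarrow> i = j" for i j using f(2) by metis
  show ?thesis
    unfolding pairs_symmetric[OF P] pairs_symmetric[OF Q]
  proof (intro equalityI subsetI)
    fix t assume "t \<in> {{i, j} | i j. i \<in> {1..n} \<and> j \<in> {1..n} \<and> i \<noteq> j \<and> P i j}"
    then obtain i j where t: "t = {i, j}" "i \<in> {1..n}" "j \<in> {1..n}" "i \<noteq> j" "P i j" by blast
    have fij: "f i \<in> {1..n}" "f j \<in> {1..n}" "f i \<noteq> f j" using t f f_eq by auto
    moreover have "Q (f i) (f j)" using PQ'[OF fij] t f(2) by simp
    moreover have "t = f ` {f i, f j}" using t f(2) by simp
    ultimately show "t \<in> (\<lambda>t. f ` t) ` {{i, j} | i j. i \<in> {1..n} \<and> j \<in> {1..n} \<and> i \<noteq> j \<and> Q i j}"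
      by blast
  next
    fix t assume "t \<in> (\<lambda>t. f ` t) ` {{i, j} | i j. i \<in> {1..n} \<and> j \<in> {1..n} \<and> i \<noteq> j \<and> Q i j}"
    then obtain i j where t: "t = {f i, f j}" "i \<in> {1..n}" "j \<in> {1..n}" "i \<noteq> j" "Q i j" by auto
    moreover have "f i \<in> {1..n}" "f j \<in> {1..n}" "f i \<noteq> f j" using t f f_eq by auto
    moreover have "P (f i) (f j)" using PQ' t by simp
    ultimately show "t \<in> {{i, j} | i j. i \<in> {1..n} \<and> j \<in> {1..n} \<and> i \<noteq> j \<and> P i j}"
      by blast
  qed
qed

subsection \<open>Covers inside a Bruhat interval\<close>

definition up_cover :: "nat \<Rightarrow> (nat \<Rightarrow> nat) \<Rightarrow> (nat \<Rightarrow> nat) \<Rightarrow> nat \<Rightarrow> nat \<Rightarrow> bool" where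
  "up_cover n u w i j \<longleftrightarrow> bruhat_lt n u (u \<circ> tr i j) \<and> bruhat_le n (u \<circ> tr i j) w \<and>
     int (len n (u \<circ> tr i j)) - int (len n u) = 1"

definition down_cover :: "nat \<Rightarrow> (nat \<Rightarrow> nat) \<Rightarrow> (nat \<Rightarrow> nat) \<Rightarrow> nat \<Rightarrow> nat \<Rightarrow> bool" where
  "down_cover n u v i j \<longleftrightarrow> bruhat_le n v (u \<circ> tr i j) \<and> bruhat_lt n (u \<circ> tr i j) u \<and>
     int (len n u) - int (len n (u \<circ> tr i j)) = 1"

lemma Tup_eq_pairs: "Tup n u v w = pairs n (up_cover n u w)"
  by (simp add: Tup_def pairs_def up_cover_def)

lemma Tdown_eq_pairs: "Tdown n u v w = pairs n (down_cover n u v)"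
  by (simp add: Tdown_def pairs_def down_cover_def)

lemma up_cover_commute: "up_cover n u w i j \<longleftrightarrow> up_cover n u w j i"
  by (simp add: up_cover_def transpose_commute)

lemma down_cover_commute: "down_cover n u v i j \<longleftrightarrow> down_cover n u v j i"
  by (simp add: down_cover_def transpose_commute)

text \<open>A transposition changing the length by one is automatically a Bruhat step, so only the
  length and the far end of the interval have to be checked.\<close>

lemma up_cover_iff:
  assumes u: "u \<in> sperm n" and w: "w \<in> sperm n" and ij: "1 \<le> i" "i < j" "j \<le> n"
  shows "up_cover n u w i j \<longleftrightarrow> len n (u \<circ> tr i j) = len n u + 1 \<and> rank_le (u \<circ> tr i j) w"
proof -
  have y: "u \<circ> tr i j \<in> sperm n" using sperm_comp_transpose[OF u] ij by auto
  have "bruhat_lt n u (u \<circ> tr i j)" if len: "len n (u \<circ> tr i j) = len n u + 1"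
  proof -
    have "bruhat_step n u (u \<circ> tr i j)"
      unfolding bruhat_step_def using u ij len by (intro conjI exI[of _ i] exI[of _ j]) auto
    then show ?thesis unfolding bruhat_lt_def bruhat_le_def using u y len by auto
  qed
  then show ?thesis unfolding up_cover_def bruhat_le_iff_rank_le using y w by auto
qed

lemma down_cover_iff:
  assumes u: "u \<in> sperm n" and v: "v \<in> sperm n" and ij: "1 \<le> i" "i < j" "j \<le> n"
  shows "down_cover n u v i j \<longleftrightarrow> len n u = len n (u \<circ> tr i j) + 1 \<and> rank_le v (u \<circ> tr i j)"
proof -
  have y: "u \<circ> tr i j \<in> sperm n" using sperm_comp_transpose[OF u] ij by auto
  have "bruhat_lt n (u \<circ> tr i j) u" if len: "len n u = len n (u \<circ> tr i j) + 1"
  proof -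
    have "bruhat_step n (u \<circ> tr i j) u"
      unfolding bruhat_step_def using y ij len comp_transpose_twice[of u i j]
      by (intro conjI exI[of _ i] exI[of _ j]) auto
    then show ?thesis unfolding bruhat_lt_def bruhat_le_def using u y len by auto
  qed
  then show ?thesis unfolding down_cover_def bruhat_le_iff_rank_le using y v by auto
qed

context
  fixes n r :: nat and u v w :: "nat \<Rightarrow> nat"
  assumes r: "1 \<le> r" "r < n"
    and u: "u \<in> sperm n" and v: "v \<in> sperm n" and w: "w \<in> sperm n"
    and Pu: "parabolic r u" and Pv: "parabolic r v" and Pw: "parabolic r w"
    and vu: "rank_le v u" and uw: "rank_le u w"
begin

abbreviation "p \<equiv> inv u r"
abbreviation "q \<equiv> inv u (Suc r)"

lemma p_q_bounds: "1 \<le> p" "p < q" "q \<le> n"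
  using parabolic_inv_positions[OF r u Pu] by auto

lemma eq_p_q_iff: "i = p \<and> j = q \<longleftrightarrow> u i = r \<and> u j = Suc r"
  using parabolic_inv_positions(5,6)[OF r u Pu] sperm_eq_iff[OF u] by metis

lemma s_comp_comp_transpose_p_q: "s r \<circ> (u \<circ> tr p q) = u"
  using s_comp_eq_comp_transpose[OF r u] comp_transpose_twice by (metis comp_assoc)

lemma sperm_u_comp_transpose: "1 \<le> i \<Longrightarrow> i < j \<Longrightarrow> j \<le> n \<Longrightarrow> u \<circ> tr i j \<in> sperm n"
  using sperm_comp_transpose[OF u] by auto

lemma up_cover_s_comp_upper:
  assumes ij: "1 \<le> i" "i < j" "j \<le> n"
  shows "up_cover n u (s r \<circ> w) i j \<longleftrightarrow> up_cover n u w i j \<or> (i = p \<and> j = q)"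
proof -
  let ?y = "u \<circ> tr i j"
  have y: "?y \<in> sperm n" using sperm_u_comp_transpose[OF ij] .
  have sw: "s r \<circ> w \<in> sperm n" using sperm_comp[OF s_sperm[OF r] w] .
  have "rank_le ?y w \<or> (i = p \<and> j = q)" if "rank_le ?y (s r \<circ> w)"
  proof (cases "parabolic r ?y")
    case True
    then show ?thesis using rank_le_of_rank_le_s_comp[OF r y w True Pw that] by simp
  next
    case False
    have "rank ?y r b \<le> rank w r b" if "b \<noteq> Suc r" for b
      using \<open>rank_le ?y (s r \<circ> w)\<close> rank_s_comp[OF that, of w r] unfolding rank_le_def by metis
    then show ?thesis
      using crossing_transpose_row[OF u _ _ Pu ij(1,2) False w Pw] r eq_p_q_iff by simp
  qed
  moreover have "rank_le w (s r \<circ> w)"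
    using bruhat_le_rank_le[OF bruhat_le_s_comp[OF r w Pw]] .
  moreover have "len n ?y = len n u + 1 \<and> rank_le ?y (s r \<circ> w)" if "i = p \<and> j = q"
    using that len_s_comp[OF r u Pu] rank_le_s_comp_iff[OF r u w Pu Pw] uw
      s_comp_eq_comp_transpose[OF r u] by simp
  ultimately show ?thesis
    unfolding up_cover_iff[OF u w ij] up_cover_iff[OF u sw ij] using rank_le_trans by blast
qed

lemma up_cover_comp_s_upper:
  assumes ij: "1 \<le> i" "i < j" "j \<le> n"
  shows "up_cover n u (w \<circ> s r) i j \<longleftrightarrow> up_cover n u w i j \<or> (i = r \<and> j = Suc r)"
proof -
  let ?y = "u \<circ> tr i j"
  have y: "?y \<in> sperm n" using sperm_u_comp_transpose[OF ij] .
  have ws: "w \<circ> s r \<in> sperm n" using sperm_comp[OF w s_sperm[OF r]] .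
  have "rank_le ?y w \<or> (i = r \<and> j = Suc r)" if "rank_le ?y (w \<circ> s r)"
  proof (cases "parabolic r ?y")
    case True
    then show ?thesis using rank_le_of_rank_le_comp_s[OF r y w True Pw that] by simp
  next
    case False
    have "rank ?y a (Suc r) \<le> rank w a (Suc r)" if "a \<noteq> r" for a
      using \<open>rank_le ?y (w \<circ> s r)\<close> rank_comp_s[OF that r(1), of w] unfolding rank_le_def by metis
    then show ?thesis using crossing_transpose_column[OF u _ Pu ij(1,2) False w Pw] r by simp
  qed
  moreover have "rank_le w (w \<circ> s r)"
    using bruhat_le_rank_le[OF bruhat_le_comp_s[OF r w Pw]] .
  moreover have "len n ?y = len n u + 1 \<and> rank_le ?y (w \<circ> s r)" if "i = r \<and> j = Suc r"
    using that len_comp_s[OF r u Pu] rank_le_comp_s_iff[OF r u w Pu Pw] uw by (simp add: s_def)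
  ultimately show ?thesis
    unfolding up_cover_iff[OF u w ij] up_cover_iff[OF u ws ij] using rank_le_trans by blast
qed

lemma up_cover_s_comp:
  assumes ij: "1 \<le> i" "i < j" "j \<le> n"
  shows "up_cover n (s r \<circ> u) (s r \<circ> w) i j \<longleftrightarrow> up_cover n u w i j"
proof -
  let ?y = "u \<circ> tr i j"
  have y: "?y \<in> sperm n" using sperm_u_comp_transpose[OF ij] .
  have su: "s r \<circ> u \<in> sperm n" and sw: "s r \<circ> w \<in> sperm n"
    using sperm_comp[OF s_sperm[OF r]] u w by auto
  have shift: "s r \<circ> u \<circ> tr i j = s r \<circ> ?y" by (simp add: comp_assoc)
  have "parabolic r ?y" if "len n (s r \<circ> ?y) = len n (s r \<circ> u) + 1" "rank_le (s r \<circ> ?y) (s r \<circ> w)"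
  proof (rule ccontr)
    assume nP: "\<not> parabolic r ?y"
    have "rank ?y r b \<le> rank w r b" if "b \<noteq> Suc r" for b
      using \<open>rank_le (s r \<circ> ?y) (s r \<circ> w)\<close> rank_s_comp[OF that, of ?y r] rank_s_comp[OF that, of w r]
      unfolding rank_le_def by metis
    then have "i = p \<and> j = q"
      using crossing_transpose_row[OF u _ _ Pu ij(1,2) nP w Pw] r eq_p_q_iff by simp
    then have "s r \<circ> ?y = u" using s_comp_comp_transpose_p_q by simp
    then show False using that(1) len_s_comp[OF r u Pu] by simp
  qed
  moreover have "parabolic r ?y" if "rank_le ?y w"
    using rank_le_parabolic[OF that Pw w] r by simp
  ultimately show ?thesis
    unfolding up_cover_iff[OF u w ij] up_cover_iff[OF su sw ij] shift
    using len_s_comp[OF r _ Pu] len_s_comp[OF r y] rank_le_s_comp_iff[OF r y w _ Pw] u by auto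
qed

lemma down_cover_s_comp:
  assumes ij: "1 \<le> i" "i < j" "j \<le> n"
  shows "down_cover n (s r \<circ> u) v i j \<longleftrightarrow> down_cover n u v i j \<or> (i = p \<and> j = q)"
proof -
  let ?y = "u \<circ> tr i j"
  have y: "?y \<in> sperm n" using sperm_u_comp_transpose[OF ij] .
  have su: "s r \<circ> u \<in> sperm n" using sperm_comp[OF s_sperm[OF r] u] .
  have shift: "s r \<circ> u \<circ> tr i j = s r \<circ> ?y" by (simp add: comp_assoc)
  have len_su: "len n (s r \<circ> u) = len n u + 1" using len_s_comp[OF r u Pu] .
  have "(len n u = len n ?y + 1 \<and> rank_le v ?y) \<or> (i = p \<and> j = q)"
    if len: "len n (s r \<circ> u) = len n (s r \<circ> ?y) + 1" and below: "rank_le v (s r \<circ> ?y)"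
  proof (cases "parabolic r ?y")
    case True
    then show ?thesis
      using len len_su len_s_comp[OF r y True] rank_le_of_rank_le_s_comp[OF r v y Pv True below] by simp
  next
    case nP: False
    have "\<not> (r < i \<or> j \<le> r)" using parabolic_comp_transpose[OF Pu ij(1,2)] nP by blast
    then have ir: "i \<le> r" "r < j" by auto
    have "(s r \<circ> u) j < (s r \<circ> u) i"
      using len_less_len_comp_transpose_iff[OF su ij] len sperm_eq_iff[OF su, of i j] ij
      by (simp add: shift nat_neq_iff)
    moreover have "u i \<le> r" using Pu ij ir unfolding parabolic_def by auto
    moreover have "r < u j" using parabolic_gt[OF u _ Pu ir(2)] r by simp
    ultimately show ?thesis using eq_p_q_iff by (auto simp: s_apply split: if_splits)
  qed
  moreover have "len n (s r \<circ> u) = len n (s r \<circ> ?y) + 1 \<and> rank_le v (s r \<circ> ?y)"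
    if len: "len n u = len n ?y + 1" and below: "rank_le v ?y"
  proof -
    have Py: "parabolic r ?y"
      using rank_le_parabolic[OF rank_le_of_len_comp_transpose_less[OF u ij] Pu u] len r by simp
    then show ?thesis
      using len len_su len_s_comp[OF r y Py] bruhat_le_rank_le[OF bruhat_le_s_comp[OF r y Py]]
        below rank_le_trans by auto
  qed
  moreover have "s r \<circ> ?y = u" if "i = p \<and> j = q"
    using that s_comp_comp_transpose_p_q by simp
  ultimately show ?thesis
    unfolding down_cover_iff[OF u v ij] down_cover_iff[OF su v ij] shift using len_su vu by auto
qed

lemma s_bounds: "k \<in> {1..n} \<Longrightarrow> s r k \<in> {1..n}"
  using r by (auto simp: s_apply)

lemma s_less_s: "i < j \<Longrightarrow> \<not> (i = r \<and> j = Suc r) \<Longrightarrow> s r i < s r j"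
  unfolding s_apply by presburger

lemma not_parabolic_comp_s: "\<not> parabolic r (u \<circ> s r)"
proof
  assume "parabolic r (u \<circ> s r)"
  then have "(u \<circ> s r) r \<le> r" using r unfolding parabolic_def by blast
  then have "u (Suc r) \<le> r" by (simp add: s_apply)
  moreover have "r < u (Suc r)" using parabolic_gt[OF u _ Pu] r by simp
  ultimately show False by simp
qed

lemma up_cover_comp_s:
  assumes ij: "1 \<le> i" "i < j" "j \<le> n"
  shows "up_cover n (u \<circ> s r) (w \<circ> s r) (s r i) (s r j) \<longleftrightarrow> up_cover n u w i j"
proof (cases "i = r \<and> j = Suc r")
  case True
  have "len n (u \<circ> s r \<circ> tr r (Suc r)) \<noteq> len n (u \<circ> s r) + 1"
    using len_comp_s[OF r u Pu] by (simp add: s_def comp_transpose_twice)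
  moreover have "\<not> rank_le (u \<circ> tr r (Suc r)) w"
    using not_parabolic_comp_s rank_le_parabolic[OF _ Pw w] r by (auto simp: s_def)
  ultimately show ?thesis
    using True up_cover_iff[OF u w ij] up_cover_iff[OF sperm_comp[OF u s_sperm[OF r]] _ ij]
      sperm_comp[OF w s_sperm[OF r]] up_cover_commute by (simp add: s_apply)
next
  case False
  let ?y = "u \<circ> tr i j"
  have y: "?y \<in> sperm n" using sperm_u_comp_transpose[OF ij] .
  have us: "u \<circ> s r \<in> sperm n" and ws: "w \<circ> s r \<in> sperm n"
    using sperm_comp[OF _ s_sperm[OF r]] u w by auto
  have sij: "1 \<le> s r i" "s r i < s r j" "s r j \<le> n"
    using s_bounds[of i] s_bounds[of j] s_less_s[OF ij(2) False] ij by auto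
  have len_us: "len n (u \<circ> s r) = len n u + 1" using len_comp_s[OF r u Pu] .
  have "parabolic r ?y" if "rank_le (?y \<circ> s r) (w \<circ> s r)"
  proof (rule ccontr)
    assume nP: "\<not> parabolic r ?y"
    have "rank ?y a (Suc r) \<le> rank w a (Suc r)" if "a \<noteq> r" for a
      using \<open>rank_le (?y \<circ> s r) (w \<circ> s r)\<close> rank_comp_s[OF that r(1), of ?y] rank_comp_s[OF that r(1), of w]
      unfolding rank_le_def by metis
    then show False using crossing_transpose_column[OF u _ Pu ij(1,2) nP w Pw] r False by simp
  qed
  moreover have "parabolic r ?y" if "rank_le ?y w"
    using rank_le_parabolic[OF that Pw w] r by simp
  ultimately show ?thesis
    unfolding up_cover_iff[OF us ws sij] up_cover_iff[OF u w ij] comp_s_comp_transpose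
    using len_us len_comp_s[OF r y] rank_le_comp_s_iff[OF r y w _ Pw] by auto
qed

lemma down_cover_comp_s:
  assumes ij: "1 \<le> i" "i < j" "j \<le> n"
  shows "down_cover n (u \<circ> s r) v (s r i) (s r j) \<longleftrightarrow> down_cover n u v i j \<or> (i = r \<and> j = Suc r)"
proof -
  have us: "u \<circ> s r \<in> sperm n" using sperm_comp[OF u s_sperm[OF r]] .
  have len_us: "len n (u \<circ> s r) = len n u + 1" using len_comp_s[OF r u Pu] .
  show ?thesis
  proof (cases "i = r \<and> j = Suc r")
    case True
    have "u \<circ> s r \<circ> tr r (Suc r) = u" by (simp add: s_def comp_transpose_twice)
    then have "down_cover n (u \<circ> s r) v r (Suc r)"
      using down_cover_iff[OF us v, of r "Suc r"] len_us vu r by simp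
    then show ?thesis using True down_cover_commute by (simp add: s_apply)
  next
    case False
    let ?y = "u \<circ> tr i j"
    have y: "?y \<in> sperm n" using sperm_u_comp_transpose[OF ij] .
    have sij: "1 \<le> s r i" "s r i < s r j" "s r j \<le> n"
      using s_bounds[of i] s_bounds[of j] s_less_s[OF ij(2) False] ij by auto
    have "len n u = len n ?y + 1 \<and> rank_le v ?y"
      if len: "len n (u \<circ> s r) = len n (?y \<circ> s r) + 1" and below: "rank_le v (?y \<circ> s r)"
    proof (cases "parabolic r ?y")
      case True
      then show ?thesis
        using len len_us len_comp_s[OF r y True] rank_le_of_rank_le_comp_s[OF r v y Pv True below] by simp
    next
      case nP: False
      have "rank_le (?y \<circ> s r) (u \<circ> s r)"
        using rank_le_of_len_comp_transpose_less[OF us sij] len by (simp add: comp_s_comp_transpose)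
      then have "rank ?y a (Suc r) \<le> rank u a (Suc r)" if "a \<noteq> r" for a
        using rank_comp_s[OF that r(1), of ?y] rank_comp_s[OF that r(1), of u] unfolding rank_le_def by metis
      then show ?thesis using crossing_transpose_column[OF u _ Pu ij(1,2) nP u Pu] r False by simp
    qed
    moreover have "len n (u \<circ> s r) = len n (?y \<circ> s r) + 1 \<and> rank_le v (?y \<circ> s r)"
      if len: "len n u = len n ?y + 1" and below: "rank_le v ?y"
    proof -
      have Py: "parabolic r ?y"
        using rank_le_parabolic[OF rank_le_of_len_comp_transpose_less[OF u ij] Pu u] len r by simp
      then show ?thesis
        using len len_us len_comp_s[OF r y Py] bruhat_le_rank_le[OF bruhat_le_comp_s[OF r y Py]]
          below rank_le_trans by auto
    qed
    ultimately show ?thesis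
      unfolding down_cover_iff[OF us v sij] down_cover_iff[OF u v ij] comp_s_comp_transpose
      using False by blast
  qed
qed

lemma Tup_s_comp_upper: "Tup n u v (s r \<circ> w) = Tup n u v w \<union> {{p, q}}"
  unfolding Tup_eq_pairs by (rule pairs_insert[OF up_cover_s_comp_upper p_q_bounds])

lemma Tup_comp_s_upper: "Tup n u v (w \<circ> s r) = Tup n u v w \<union> {{r, Suc r}}"
  unfolding Tup_eq_pairs by (rule pairs_insert[OF up_cover_comp_s_upper]) (use r in auto)

lemma Tup_s_comp: "Tup n (s r \<circ> u) v (s r \<circ> w) = Tup n u v w"
  unfolding Tup_eq_pairs by (rule pairs_cong[OF up_cover_s_comp])

lemma Tdown_s_comp: "Tdown n (s r \<circ> u) v (s r \<circ> w) = Tdown n u v w \<union> {{p, q}}"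
  unfolding Tdown_eq_pairs by (rule pairs_insert[OF down_cover_s_comp p_q_bounds])

lemma Tup_comp_s: "Tup n (u \<circ> s r) v (w \<circ> s r) = (\<lambda>t. s r ` t) ` Tup n u v w"
  unfolding Tup_eq_pairs
  by (rule pairs_image[where P = "up_cover n (u \<circ> s r) (w \<circ> s r)" and Q = "up_cover n u w",
        OF s_bounds s_involutory up_cover_commute up_cover_commute up_cover_comp_s])

lemma Tdown_comp_s:
  "Tdown n (u \<circ> s r) v (w \<circ> s r) = (\<lambda>t. s r ` t) ` Tdown n u v w \<union> {{r, Suc r}}"
proof -
  define Q where "Q i j \<longleftrightarrow> down_cover n u v i j \<or> {i, j} = {r, Suc r}" for i j
  have "pairs n (down_cover n (u \<circ> s r) v) = (\<lambda>t. s r ` t) ` pairs n Q"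
  proof (rule pairs_image[where P = "down_cover n (u \<circ> s r) v", OF s_bounds s_involutory down_cover_commute])
    show "Q i j \<longleftrightarrow> Q j i" for i j
      unfolding Q_def using down_cover_commute by (simp add: insert_commute)
    show "down_cover n (u \<circ> s r) v (s r i) (s r j) \<longleftrightarrow> Q i j" if "1 \<le> i" "i < j" "j \<le> n" for i j
      using down_cover_comp_s[OF that] that unfolding Q_def by (auto simp: doubleton_eq_iff)
  qed
  moreover have "pairs n Q = pairs n (down_cover n u v) \<union> {{r, Suc r}}"
    by (rule pairs_insert) (use r in \<open>auto simp: Q_def doubleton_eq_iff\<close>)
  moreover have "s r ` {r, Suc r} = {r, Suc r}" by (auto simp: s_apply)
  ultimately show ?thesis unfolding Tdown_eq_pairs by simp
qed

end

theorem lemma5p6: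
  fixes n r :: nat and u v w :: "nat \<Rightarrow> nat"
  assumes "u \<in> sperm n" and "v \<in> sperm n" and "w \<in> sperm n"
    and "bruhat_le n v u" and "bruhat_le n u w"
    and "1 \<le> r" and "r \<le> n - 1"
    and "s r \<notin> supp n w"
  shows "Tdown n u v (s r \<circ> w) = Tdown n u v w \<and> Tdown n u v (w \<circ> s r) = Tdown n u v w \<and>
     Tup n u v (s r \<circ> w) = Tup n u v w \<union> {{inv u r, inv u (Suc r)}} \<and>
     Tup n u v (w \<circ> s r) = Tup n u v w \<union> {{r, Suc r}} \<and>
     Tup n (s r \<circ> u) v (s r \<circ> w) = Tup n u v w \<and>
     Tdown n (s r \<circ> u) v (s r \<circ> w) = Tdown n u v w \<union> {{inv u r, inv u (Suc r)}} \<and>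
     Tup n (u \<circ> s r) v (w \<circ> s r) = (\<lambda>t. s r ` t) ` Tup n u v w \<and>
     Tdown n (u \<circ> s r) v (w \<circ> s r) = ((\<lambda>t. s r ` t) ` Tdown n u v w) \<union> {{r, Suc r}}"
proof -
  note u = assms(1) and v = assms(2) and w = assms(3)
  have r: "1 \<le> r" "r < n" using assms(6,7) by linarith+
  have vu: "rank_le v u" and uw: "rank_le u w" using assms(4,5) by (simp_all add: bruhat_le_rank_le)
  have Pw: "parabolic r w" using parabolic_if_s_notin_supp[OF w assms(8)] .
  have Pu: "parabolic r u" using rank_le_parabolic[OF uw Pw w] r by simp
  have Pv: "parabolic r v" using rank_le_parabolic[OF vu Pu u] r by simp
  note interval = r u v w Pu Pv Pw vu uw
  have "Tdown n u v w' = Tdown n u v w" for w' by (simp add: Tdown_def)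
  then show ?thesis
    using Tup_s_comp_upper[OF interval] Tup_comp_s_upper[OF interval] Tup_s_comp[OF interval]
      Tdown_s_comp[OF interval] Tup_comp_s[OF interval] Tdown_comp_s[OF interval]
    by blast
qed

end
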